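(* Let $\mathbb{K}$ be a field, $k\ge1$, and let $\mathcal{C}\subseteq\mathbb{K}^{2k}$ be a self-dual code with generator matrix $G\in\mathbb{K}^{k\times 2k}$ having no two proportional columns, so that $\Pi_G$ consists of $2k$ distinct points of $\mathbb{P}^{k-1}(\overline{\mathbb{K}})$. Then $\Pi_G$ fails by exactly $\mathrm{nb}(\mathcal{C})$ to impose independent conditions on quadrics; equivalently, $$\mathrm{gd}(\Pi_G)=2k-\dim_{\mathbb{K}}(\mathcal{C}^{(2)})-1=\mathrm{nb}(\mathcal{C})-1.$$
   Context: A linear code of length $n$ over $\mathbb{K}$ is a $\mathbb{K}$-subspace $\mathcal{C}\subseteq\mathbb{K}^n$; self-dual means $\mathcal{C}=\mathcal{C}^\perp$ for the standard bilinear form. $\overline{\mathbb{K}}$ is an algebraic closure of $\mathbb{K}$. For a generator matrix $G$ of $\mathcal{C}$, $\Pi_G\subseteq\mathbb{P}^{k-1}(\overline{\mathbb{K}})$ is the set of points represented by the columns of $G$. The Schur square $\mathcal{C}^{(2)}$ is the span of all componentwise products $c\ast c'=(c_1c'_1,\dots,c_nc'_n)$, $c,c'\in\mathcal{C}$. A set of $N$ points in $\mathbb{P}^{k-1}(\overline{\mathbb{K}})$ fails by $m$ to impose independent conditions on quadrics if the space of quadratic forms in $\overline{\mathbb{K}}[x_1,\dots,x_k]_2$ vanishing on it has dimension $\binom{k+1}{2}-(N-m)$. For $2k$ points failing by $m$, the Gorenstein defect is $\mathrm{gd}=m-1$. Codes are equivalent if they differ by a coordinate permutation; a code is decomposable if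 equivalent to a direct sum $\{(c_1,c_2):c_i\in\mathcal{C}_i\}$ of two nontrivial codes, indecomposable otherwise; $\mathrm{nb}(\mathcal{C})$ is the number of indecomposable blocks in a decomposition of $\mathcal{C}$ into a direct sum of indecomposable codes (an invariant of $\mathcal{C}$). *)

theory Defs
  imports "HOL-Algebra.Algebraic_Closure_Type" "HOL-Library.Function_Algebras"
          "HOL-Library.Disjoint_Sets"
begin

(* Vectors of K^n are functions nat => K supported on {..<n}; more generally a code
   on a finite coordinate set I is a K-subspace of functions supported on I. *)

definition scal :: "'a::field \<Rightarrow> (nat \<Rightarrow> 'a) \<Rightarrow> (nat \<Rightarrow> 'a)" where
  "scal c v = (\<lambda>j. c * v j)"

definition vdim :: "(nat \<Rightarrow> 'a::field) set \<Rightarrow> nat" where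
  "vdim S = vector_space.dim scal S"

definition supported_on :: "nat set \<Rightarrow> (nat \<Rightarrow> 'a::zero) \<Rightarrow> bool" where
  "supported_on I v \<longleftrightarrow> (\<forall>j. j \<notin> I \<longrightarrow> v j = 0)"

definition is_code :: "nat set \<Rightarrow> (nat \<Rightarrow> 'a::field) set \<Rightarrow> bool" where
  "is_code I C \<longleftrightarrow> module.subspace scal C \<and> (\<forall>v\<in>C. supported_on I v)"

definition dot :: "nat \<Rightarrow> (nat \<Rightarrow> 'a::field) \<Rightarrow> (nat \<Rightarrow> 'a) \<Rightarrow> 'a" where
  "dot n u v = (\<Sum>j<n. u j * v j)"

definition dual_code :: "nat \<Rightarrow> (nat \<Rightarrow> 'a::field) set \<Rightarrow> (nat \<Rightarrow> 'a) set" where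
  "dual_code n C = {v. supported_on {..<n} v \<and> (\<forall>c\<in>C. dot n v c = 0)}"

definition self_dual :: "nat \<Rightarrow> (nat \<Rightarrow> 'a::field) set \<Rightarrow> bool" where
  "self_dual n C \<longleftrightarrow> is_code {..<n} C \<and> C = dual_code n C"

(* G is a k x n matrix: entries G i j for i < k, j < n *)
definition rowspace :: "nat \<Rightarrow> nat \<Rightarrow> (nat \<Rightarrow> nat \<Rightarrow> 'a::field) \<Rightarrow> (nat \<Rightarrow> 'a) set" where
  "rowspace k n G = {(\<lambda>j. if j < n then (\<Sum>i<k. c i * G i j) else 0) | c. True}"

definition rows_independent :: "nat \<Rightarrow> nat \<Rightarrow> (nat \<Rightarrow> nat \<Rightarrow> 'a::field) \<Rightarrow> bool" where
  "rows_independent k n G \<longleftrightarrow>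
     (\<forall>c. (\<forall>j<n. (\<Sum>i<k. c i * G i j) = 0) \<longrightarrow> (\<forall>i<k. c i = 0))"

definition generator_matrix ::
  "nat \<Rightarrow> nat \<Rightarrow> (nat \<Rightarrow> nat \<Rightarrow> 'a::field) \<Rightarrow> (nat \<Rightarrow> 'a) set \<Rightarrow> bool" where
  "generator_matrix k n G C \<longleftrightarrow> C = rowspace k n G \<and> rows_independent k n G"

definition proportional_columns :: "nat \<Rightarrow> (nat \<Rightarrow> nat \<Rightarrow> 'a::field) \<Rightarrow> nat \<Rightarrow> nat \<Rightarrow> bool" where
  "proportional_columns k G j j' \<longleftrightarrow>
     (\<exists>a. \<forall>i<k. G i j = a * G i j') \<or> (\<exists>a. \<forall>i<k. G i j' = a * G i j)"

definition no_two_proportional_columns :: "nat \<Rightarrow> nat \<Rightarrow> (nat \<Rightarrow> nat \<Rightarrow> 'a::field) \<Rightarrow> bool" where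
  "no_two_proportional_columns k n G \<longleftrightarrow>
     (\<forall>j<n. \<forall>j'<n. j \<noteq> j' \<longrightarrow> \<not> proportional_columns k G j j')"

definition schur_square :: "(nat \<Rightarrow> 'a::field) set \<Rightarrow> (nat \<Rightarrow> 'a) set" where
  "schur_square C = module.span scal {(\<lambda>j. u j * v j) | u v. u \<in> C \<and> v \<in> C}"

(* Direct-sum decompositions, up to coordinate permutation, expressed via partitions
   of the coordinate set. *)
definition proj :: "nat set \<Rightarrow> (nat \<Rightarrow> 'a::zero) \<Rightarrow> (nat \<Rightarrow> 'a)" where
  "proj B v = (\<lambda>j. if j \<in> B then v j else 0)"

definition splits_along :: "nat set \<Rightarrow> (nat \<Rightarrow> 'a::field) set \<Rightarrow> nat set set \<Rightarrow> bool" where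
  "splits_along I C P \<longleftrightarrow>
     C = {v. supported_on I v \<and> (\<forall>B\<in>P. proj B v \<in> proj B ` C)}"

definition decomposable :: "nat set \<Rightarrow> (nat \<Rightarrow> 'a::field) set \<Rightarrow> bool" where
  "decomposable I C \<longleftrightarrow>
     (\<exists>S T. S \<noteq> {} \<and> T \<noteq> {} \<and> S \<inter> T = {} \<and> S \<union> T = I \<and> splits_along I C {S, T})"

definition indecomposable_decomposition ::
  "nat set \<Rightarrow> (nat \<Rightarrow> 'a::field) set \<Rightarrow> nat set set \<Rightarrow> bool" where
  "indecomposable_decomposition I C P \<longleftrightarrow>
     partition_on I P \<and> splits_along I C P \<and> (\<forall>B\<in>P. \<not> decomposable B (proj B ` C))"

(* nb(C): number of indecomposable blocks (an invariant of C) *)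
definition nb :: "nat set \<Rightarrow> (nat \<Rightarrow> 'a::field) set \<Rightarrow> nat" where
  "nb I C = (SOME m. \<exists>P. indecomposable_decomposition I C P \<and> card P = m)"

(* Quadratic forms in k variables over Kbar = 'a alg_closure:
   Q i l is the coefficient of x_i x_l, i <= l < k. *)
definition scalQ :: "'b::field \<Rightarrow> (nat \<Rightarrow> nat \<Rightarrow> 'b) \<Rightarrow> (nat \<Rightarrow> nat \<Rightarrow> 'b)" where
  "scalQ c Q = (\<lambda>i l. c * Q i l)"

definition qdim :: "(nat \<Rightarrow> nat \<Rightarrow> 'b::field) set \<Rightarrow> nat" where
  "qdim S = vector_space.dim scalQ S"

definition quad_forms :: "nat \<Rightarrow> (nat \<Rightarrow> nat \<Rightarrow> 'b::field) set" where
  "quad_forms k = {Q. \<forall>i l. (k \<le> l \<or> l < i) \<longrightarrow> Q i l = 0}"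

definition qeval :: "nat \<Rightarrow> (nat \<Rightarrow> nat \<Rightarrow> 'b::field) \<Rightarrow> (nat \<Rightarrow> 'b) \<Rightarrow> 'b" where
  "qeval k Q p = (\<Sum>i<k. \<Sum>l<k. Q i l * p i * p l)"

(* quadrics over Kbar vanishing on Pi_G (points = columns of G, j < n) *)
definition vanishing_quadrics ::
  "nat \<Rightarrow> nat \<Rightarrow> (nat \<Rightarrow> nat \<Rightarrow> 'a::field) \<Rightarrow> (nat \<Rightarrow> nat \<Rightarrow> 'a alg_closure) set" where
  "vanishing_quadrics k n G =
     {Q \<in> quad_forms k. \<forall>j<n. qeval k Q (\<lambda>i. to_ac (G i j)) = 0}"

definition fails_by :: "nat \<Rightarrow> nat \<Rightarrow> (nat \<Rightarrow> nat \<Rightarrow> 'a::field) \<Rightarrow> nat \<Rightarrow> bool" where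
  "fails_by k n G m \<longleftrightarrow>
     int (qdim (vanishing_quadrics k n G)) = int ((k + 1) choose 2) - (int n - int m)"

definition gd :: "nat \<Rightarrow> nat \<Rightarrow> (nat \<Rightarrow> nat \<Rightarrow> 'a::field) \<Rightarrow> int" where
  "gd k n G = (THE g. \<exists>m. fails_by k n G m \<and> g = int m - 1)"

end

theory Submission
  imports Defs "HOL-Library.Indicator_Function"
begin

(* Write m_il for the componentwise product of rows i and l of G. A quadric with coefficients
   Q_il vanishes at the columns of G exactly when sum Q_il m_il = 0, so the quadrics through
   Pi_G are the linear relations among the m_il. The m_il span the Schur square, and linear
   independence over K survives the passage to the algebraic closure, so these quadrics form a
   space of dimension binom(k+1, 2) - dim C^(2).
   Since C is self-dual, w is orthogonal to C^(2) if and only if w * C is contained in C. These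
   w form an algebra that contains the indicators of the level sets of its elements (Lagrange
   interpolation); indicators in it are exactly the ways of splitting C into direct summands, so
   it is spanned by the indicators of the indecomposable blocks and has dimension nb(C). Hence
   dim C^(2) = 2k - nb(C). *)

section \<open>Linear algebra in \<open>K\<^sup>n\<close>\<close>

interpretation V: vector_space "scal :: 'a::field \<Rightarrow> (nat \<Rightarrow> 'a) \<Rightarrow> nat \<Rightarrow> 'a"
  by unfold_locales (auto simp: scal_def fun_eq_iff algebra_simps)

lemma scal_apply [simp]: "scal c v j = c * v j"
  by (simp add: scal_def)

lemma sum_fun_apply: "(\<Sum>i\<in>A. f i) x = (\<Sum>i\<in>A. f i x)"
  by (induction A rule: infinite_finite_induct) auto

lemma subspace_supported_on: "V.subspace {v :: nat \<Rightarrow> 'a::field. supported_on I v}"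
  by (auto simp: V.subspace_def supported_on_def)

lemma dot_commute: "dot n u v = dot n v u"
  by (simp add: dot_def mult.commute)

lemma dot_zero_right [simp]: "dot n u 0 = 0"
  by (simp add: dot_def)

lemma dot_add_right: "dot n u (v + w) = dot n u v + dot n u w"
  by (simp add: dot_def algebra_simps sum.distrib)

lemma dot_diff_right: "dot n u (v - w) = dot n u v - dot n u w"
  by (simp add: dot_def algebra_simps sum_subtractf)

lemma dot_scal_right: "dot n u (scal c v) = c * dot n u v"
  by (simp add: dot_def algebra_simps sum_distrib_left)

lemma dot_sum_right: "dot n u (\<Sum>i\<in>A. f i) = (\<Sum>i\<in>A. dot n u (f i))"
  by (simp add: dot_def sum_fun_apply sum_distrib_left sum.swap[of _ A])

lemma dot_mult_left: "dot n (u * w) v = dot n u (w * v)"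
  by (simp add: dot_def mult.assoc)

lemma dot_indicator_right: "j < n \<Longrightarrow> dot n v (indicator {j}) = v j"
  by (simp add: dot_def indicator_times_eq_if)

lemma subspace_dot_eq_0: "V.subspace {v. dot n u v = 0}"
  by (auto simp: V.subspace_def dot_add_right dot_scal_right)

lemma dual_code_antimono: "S \<subseteq> T \<Longrightarrow> dual_code n T \<subseteq> dual_code n S"
  by (auto simp: dual_code_def)

lemma dual_code_span [simp]: "dual_code n (V.span S) = dual_code n S"
proof
  show "dual_code n S \<subseteq> dual_code n (V.span S)"
  proof
    fix w assume w: "w \<in> dual_code n S"
    have "V.span S \<subseteq> {c. dot n w c = 0}"
      using w by (intro V.span_minimal subspace_dot_eq_0) (auto simp: dual_code_def)
    with w show "w \<in> dual_code n (V.span S)"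
      by (auto simp: dual_code_def)
  qed
qed (rule dual_code_antimono[OF V.span_superset])

lemma inj_on_indicator: "inj_on (indicator :: 'b set \<Rightarrow> 'b \<Rightarrow> 'a::zero_neq_one) P"
  by (rule inj_onI) (metis indicator_eq_1_iff subsetI subset_antisym)

lemma independent_indicators:
  assumes "finite P" "disjoint P" "{} \<notin> P"
  shows "V.independent ((indicator :: nat set \<Rightarrow> nat \<Rightarrow> 'a::field) ` P)"
proof (rule V.independent_if_scalars_zero)
  fix f :: "(nat \<Rightarrow> 'a) \<Rightarrow> 'a" and v :: "nat \<Rightarrow> 'a"
  assume sum0: "(\<Sum>x\<in>indicator ` P. scal (f x) x) = 0" and "v \<in> indicator ` P"
  then obtain B where B: "B \<in> P" "v = indicator B" by blast
  with assms(3) obtain b where b: "b \<in> B"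
    by (metis all_not_in_conv)
  have "x b = 0" if x: "x \<in> indicator ` P" "x \<noteq> v" for x :: "nat \<Rightarrow> 'a"
  proof -
    obtain B' where B': "B' \<in> P" "x = indicator B'" using x(1) by blast
    with x(2) B have "B' \<noteq> B" by auto
    with B B' b assms(2) have "b \<notin> B'" by (auto simp: disjoint_def)
    with B' show ?thesis by simp
  qed
  then have "(\<Sum>x\<in>indicator ` P. scal (f x) x) b = f v"
    using B b assms(1) by (simp add: sum_fun_apply sum.remove[of _ v] sum.neutral)
  with sum0 show "f v = 0" by simp
qed (use assms(1) in simp)

lemma sum_indicator_singleton_apply:
  "finite A \<Longrightarrow> (\<Sum>j\<in>A. c j * indicator {j} x) = (if x \<in> A then c x else (0::'a::comm_ring_1))"
  by (simp add: indicator_def of_bool_def if_distrib sum.delta' cong: if_cong)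

lemma supported_on_in_span_indicators:
  assumes "supported_on {..<n} v"
  shows "v \<in> V.span ((\<lambda>j. indicator {j}) ` {..<n})"
proof -
  have "v = (\<Sum>j<n. scal (v j) (indicator {j}))"
    using assms by (auto simp: fun_eq_iff sum_fun_apply sum_indicator_singleton_apply supported_on_def)
  also have "\<dots> \<in> V.span ((\<lambda>j. indicator {j}) ` {..<n})"
    by (intro V.span_sum V.span_scale V.span_base) auto
  finally show ?thesis .
qed

lemma dim_supported_on: "V.dim {v :: nat \<Rightarrow> 'a::field. supported_on {..<n} v} = n"
proof -
  let ?E = "(\<lambda>j. indicator {j} :: nat \<Rightarrow> 'a) ` {..<n}"
  have "?E = indicator ` ((\<lambda>j. {j}) ` {..<n})"
    by (simp add: image_image)
  then have "V.independent ?E"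
    using independent_indicators[of "(\<lambda>j. {j}) ` {..<n}"] by (auto simp: disjoint_def)
  moreover have "card ?E = n"
    using inj_on_indicator[of "(\<lambda>j. {j}) ` {..<n}"]
    by (subst card_image) (auto simp: inj_on_def)
  moreover have "?E \<subseteq> {v. supported_on {..<n} v}"
    by (auto simp: supported_on_def)
  ultimately show ?thesis
    using supported_on_in_span_indicators by (metis V.basis_card_eq_dim mem_Collect_eq subsetI)
qed

lemma finite_independent_supported_on:
  assumes "V.independent U" "U \<subseteq> {v :: nat \<Rightarrow> 'a::field. supported_on {..<n} v}"
  shows "finite U"
  using V.independent_span_bound[of "(\<lambda>j. indicator {j}) ` {..<n}" U] assms
    supported_on_in_span_indicators by blast

lemma exists_dual_vector:
  assumes indep: "V.independent (insert b0 B)" and "b0 \<notin> B" "finite B"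
    and supp: "insert b0 B \<subseteq> {v. supported_on {..<n} v}" "\<forall>b\<in>B. supported_on {..<n} (y b)"
    and dual: "\<forall>b\<in>B. \<forall>b'\<in>B. dot n b (y b') = (if b = b' then 1 else 0)"
  obtains z where "supported_on {..<n} z" "dot n b0 z = 1" "\<forall>b\<in>B. dot n b z = 0"
proof -
  define u where "u = b0 - (\<Sum>b\<in>B. scal (dot n b0 (y b)) b)"
  have "u \<noteq> 0"
  proof
    assume "u = 0"
    then have "b0 = (\<Sum>b\<in>B. scal (dot n b0 (y b)) b)"
      by (simp add: u_def)
    also have "\<dots> \<in> V.span B"
      by (intro V.span_sum V.span_scale V.span_base)
    finally have "b0 \<in> V.span B" .
    with indep \<open>b0 \<notin> B\<close> show False
      by (simp add: V.independent_insert)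
  qed
  moreover have "supported_on {..<n} u"
    using supp by (auto simp: u_def supported_on_def sum_fun_apply intro!: sum.neutral)
  ultimately obtain j where j: "j < n" "u j \<noteq> 0"
    by (auto simp: supported_on_def fun_eq_iff)
  \<comment> \<open>\<open>z'\<close> is orthogonal to \<open>B\<close> and pairs with \<open>b0\<close> to the coordinate \<open>u j \<noteq> 0\<close>.\<close>
  define z' where "z' = indicator {j} - (\<Sum>b\<in>B. scal (b j) (y b))"
  have "dot n b z' = 0" if "b \<in> B" for b
  proof -
    have "(\<Sum>b'\<in>B. b' j * dot n b (y b')) = (\<Sum>b'\<in>B. if b = b' then b j else 0)"
      using dual that by (intro sum.cong) auto
    then show ?thesis
      using that \<open>finite B\<close> j(1)
      by (simp add: z'_def dot_diff_right dot_sum_right dot_scal_right dot_indicator_right)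
  qed
  moreover have "dot n b0 z' = u j"
    using j(1) by (simp add: z'_def u_def dot_diff_right dot_sum_right dot_scal_right
        dot_indicator_right sum_fun_apply mult.commute)
  moreover have "supported_on {..<n} z'"
    using supp j(1) by (auto simp: z'_def supported_on_def sum_fun_apply)
  ultimately show thesis
    using j(2) by (intro that[of "scal (1 / u j) z'"]) (auto simp: dot_scal_right supported_on_def)
qed

lemma exists_dual_family:
  assumes "V.independent B" "B \<subseteq> {v. supported_on {..<n} v}"
  obtains y where "\<forall>b\<in>B. supported_on {..<n} (y b)"
    "\<forall>b\<in>B. \<forall>b'\<in>B. dot n b (y b') = (if b = b' then 1 else 0)"
proof -
  have "finite B"
    using assms by (rule finite_independent_supported_on)
  then have "\<exists>y. (\<forall>b\<in>B. supported_on {..<n} (y b)) \<and>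
      (\<forall>b\<in>B. \<forall>b'\<in>B. dot n b (y b') = (if b = b' then 1 else 0))"
    using assms
  proof (induction B rule: finite_induct)
    case (insert b0 B)
    obtain y where y: "\<forall>b\<in>B. supported_on {..<n} (y b)"
      "\<forall>b\<in>B. \<forall>b'\<in>B. dot n b (y b') = (if b = b' then 1 else 0)"
      using insert.IH insert.prems V.independent_mono by (metis subset_insertI subset_trans)
    obtain z where z: "supported_on {..<n} z" "dot n b0 z = 1" "\<forall>b\<in>B. dot n b z = 0"
      using exists_dual_vector[OF insert.prems(1) insert.hyps(2,1) insert.prems(2) y] .
    define y' where "y' b = (if b = b0 then z else y b - scal (dot n b0 (y b)) z)" for b
    have "dot n b (y' b') = (if b = b' then 1 else 0)" if "b \<in> insert b0 B" "b' \<in> insert b0 B" for b b'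
      using that y(2) z(2,3) insert.hyps(2)
      by (auto simp: y'_def dot_diff_right dot_scal_right)
    moreover have "supported_on {..<n} (y' b)" if "b \<in> insert b0 B" for b
      using that y(1) z(1) by (auto simp: y'_def supported_on_def)
    ultimately show ?case
      by blast
  qed simp
  with that show thesis
    by blast
qed

context
  fixes n :: nat and B :: "(nat \<Rightarrow> 'a::field) set" and y :: "(nat \<Rightarrow> 'a) \<Rightarrow> nat \<Rightarrow> 'a"
  assumes finite_B: "finite B"
    and supported_y: "\<forall>b\<in>B. supported_on {..<n} (y b)"
    and dual_y: "\<forall>b\<in>B. \<forall>b'\<in>B. dot n b (y b') = (if b = b' then 1 else 0)"
begin

lemma dot_dual_family_union:
  assumes "A \<subseteq> dual_code n B" "b \<in> B" "u \<in> y ` B \<union> A"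
  shows "dot n b u = (if u = y b then 1 else 0)"
proof (cases "u \<in> A")
  case True
  with assms have "dot n b u = 0"
    by (auto simp: dual_code_def dot_commute)
  with dual_y assms(2) show ?thesis
    by auto
next
  case False
  with assms(3) obtain b' where "b' \<in> B" "u = y b'"
    by blast
  with dual_y assms(2) show ?thesis
    by (metis one_neq_zero)
qed

lemma independent_dual_family_union:
  assumes A: "A \<subseteq> dual_code n B" "V.independent A" "finite A"
  shows "V.independent (y ` B \<union> A)"
proof (rule V.independent_if_scalars_zero)
  show finite_U: "finite (y ` B \<union> A)"
    using finite_B A(3) by simp
  fix f u0
  assume sum0: "(\<Sum>u\<in>y ` B \<union> A. scal (f u) u) = 0" and u0: "u0 \<in> y ` B \<union> A"
  have f_y: "f (y b) = 0" if "b \<in> B" for b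
  proof -
    have "0 = dot n b (\<Sum>u\<in>y ` B \<union> A. scal (f u) u)"
      by (simp add: sum0)
    also have "\<dots> = (\<Sum>u\<in>y ` B \<union> A. f u * dot n b u)"
      by (simp add: dot_sum_right dot_scal_right)
    also have "\<dots> = (\<Sum>u\<in>y ` B \<union> A. if u = y b then f u else 0)"
      using A(1) that by (intro sum.cong refl) (simp add: dot_dual_family_union)
    also have "\<dots> = f (y b)"
      using finite_U that by simp
    finally show ?thesis ..
  qed
  have "(\<Sum>u\<in>A. scal (f u) u) = 0"
    using sum0 f_y finite_U by (subst (asm) sum.mono_neutral_right[of _ A]) auto
  with A u0 f_y show "f u0 = 0"
    using V.independentD[OF A(2,3) subset_refl] by blast
qed

lemma span_dual_family_union:
  assumes "dual_code n B \<subseteq> V.span A"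
  shows "{v. supported_on {..<n} v} \<subseteq> V.span (y ` B \<union> A)"
proof
  fix w :: "nat \<Rightarrow> 'a"
  assume w: "w \<in> {v. supported_on {..<n} v}"
  define w' where "w' = w - (\<Sum>b\<in>B. scal (dot n b w) (y b))"
  have "dot n w' b = 0" if "b \<in> B" for b
  proof -
    have "(\<Sum>b'\<in>B. dot n b' w * dot n b (y b')) = (\<Sum>b'\<in>B. if b = b' then dot n b w else 0)"
      using dual_y that by (intro sum.cong) auto
    then have "dot n b w' = 0"
      using that finite_B by (simp add: w'_def dot_diff_right dot_sum_right dot_scal_right)
    then show ?thesis
      by (simp add: dot_commute)
  qed
  moreover have "supported_on {..<n} w'"
    using w supported_y by (auto simp: w'_def supported_on_def sum_fun_apply intro!: sum.neutral)
  ultimately have "w' \<in> V.span A"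
    using assms by (auto simp: dual_code_def)
  then have "w' \<in> V.span (y ` B \<union> A)"
    using V.span_mono[of A "y ` B \<union> A"] by blast
  moreover have "(\<Sum>b\<in>B. scal (dot n b w) (y b)) \<in> V.span (y ` B \<union> A)"
    by (intro V.span_sum V.span_scale V.span_base) auto
  ultimately have "w' + (\<Sum>b\<in>B. scal (dot n b w) (y b)) \<in> V.span (y ` B \<union> A)"
    by (rule V.span_add)
  then show "w \<in> V.span (y ` B \<union> A)"
    by (simp add: w'_def)
qed

lemma card_dual_family_union:
  assumes "A \<subseteq> dual_code n B" "finite A"
  shows "card (y ` B \<union> A) = card B + card A"
proof -
  have "inj_on y B"
    using dual_y by (intro inj_onI) (metis one_neq_zero)
  moreover have "y b \<notin> A" if "b \<in> B" for b
  proof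
    assume "y b \<in> A"
    with assms(1) that have "dot n (y b) b = 0"
      by (auto simp: dual_code_def)
    with dual_y that show False
      by (simp add: dot_commute)
  qed
  then have "y ` B \<inter> A = {}"
    by blast
  ultimately show ?thesis
    using finite_B assms(2) by (simp add: card_Un_disjoint card_image)
qed

end

lemma dim_add_dim_dual_code:
  assumes M: "M \<subseteq> {v :: nat \<Rightarrow> 'a::field. supported_on {..<n} v}"
  shows "V.dim M + V.dim (dual_code n M) = n"
proof -
  obtain B where B: "B \<subseteq> M" "V.independent B" "M \<subseteq> V.span B" "card B = V.dim M"
    using V.basis_exists by blast
  then have dual_code_M: "dual_code n M = dual_code n B"
    using dual_code_antimono dual_code_span by (metis subset_antisym)
  obtain A where A: "A \<subseteq> dual_code n B" "V.independent A" "dual_code n B \<subseteq> V.span A"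
    "card A = V.dim (dual_code n B)"
    using V.basis_exists by blast
  have B_supported: "B \<subseteq> {v. supported_on {..<n} v}"
    using B(1) M by blast
  have "finite B"
    using B(2) B_supported by (rule finite_independent_supported_on)
  have "finite A"
    using A(1,2) by (intro finite_independent_supported_on) (auto simp: dual_code_def)
  obtain y where y: "\<forall>b\<in>B. supported_on {..<n} (y b)"
    "\<forall>b\<in>B. \<forall>b'\<in>B. dot n b (y b') = (if b = b' then 1 else 0)"
    using exists_dual_family[OF B(2) B_supported] .
  have "y ` B \<union> A \<subseteq> {v. supported_on {..<n} v}"
    using y(1) A(1) by (auto simp: dual_code_def)
  moreover have "{v. supported_on {..<n} v} \<subseteq> V.span (y ` B \<union> A)"
    using \<open>finite B\<close> y A(3) by (rule span_dual_family_union)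
  moreover have "V.independent (y ` B \<union> A)"
    using \<open>finite B\<close> y A(1,2) \<open>finite A\<close> by (rule independent_dual_family_union)
  ultimately have "card (y ` B \<union> A) = V.dim {v :: nat \<Rightarrow> 'a. supported_on {..<n} v}"
    by (rule V.basis_card_eq_dim)
  then show ?thesis
    using card_dual_family_union[OF \<open>finite B\<close> y A(1) \<open>finite A\<close>] dual_code_M B(4) A(4)
    by (simp add: dim_supported_on)
qed

section \<open>The stabilizer of a code and its blocks\<close>

definition stabilizer :: "nat set \<Rightarrow> (nat \<Rightarrow> 'a::field) set \<Rightarrow> (nat \<Rightarrow> 'a) set" where
  "stabilizer I C = {w. supported_on I w \<and> (\<forall>c\<in>C. w * c \<in> C)}"

lemma proj_eq_indicator_mult: "proj B v = indicator B * (v :: nat \<Rightarrow> 'a::field)"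
  by (simp add: proj_def fun_eq_iff)

lemma supported_on_indicator: "B \<subseteq> I \<Longrightarrow> supported_on I (indicator B :: nat \<Rightarrow> 'a::zero_neq_one)"
  by (auto simp: supported_on_def split: split_indicator)

lemma indicator_mult_supported_on:
  "supported_on B v \<Longrightarrow> indicator B * v = (v :: nat \<Rightarrow> 'a::field)"
  by (auto simp: supported_on_def fun_eq_iff split: split_indicator)

lemma indicator_diff_subset:
  "S \<subseteq> B \<Longrightarrow> indicator (B - S) = indicator B - (indicator S :: 'b \<Rightarrow> 'a::ring_1)"
  by (auto simp: fun_eq_iff split: split_indicator)

lemma sum_indicators_partition:
  assumes "partition_on I P" "finite P"
  shows "(\<Sum>B\<in>P. indicator B) = (indicator I :: 'b \<Rightarrow> 'a::field)"
proof
  fix x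
  have "disjoint_family_on id P"
    using assms(1) by (auto simp: disjoint_family_on_def partition_on_def disjoint_def)
  with assms(2) have "indicator (\<Union>(id ` P)) x = (\<Sum>B\<in>P. indicator (id B) x :: 'a)"
    by (rule indicator_UN_disjoint)
  with assms(1) show "(\<Sum>B\<in>P. indicator B) x = (indicator I x :: 'a)"
    by (simp add: sum_fun_apply partition_on_def)
qed

lemma sum_indicators_partition_apply:
  assumes "partition_on I P" "finite P" "B0 \<in> P" "x \<in> B0"
  shows "(\<Sum>B\<in>P. f B * indicator B x) = (f B0 :: 'a::field)"
proof -
  have "f B * indicator B x = (if B = B0 then f B0 else 0)" if "B \<in> P" for B
  proof (cases "x \<in> B")
    case True
    then have "B = B0"
      using disjointD[OF partition_onD2[OF assms(1)] that assms(3)] assms(4) by blast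
    with True show ?thesis
      by simp
  qed (use assms(4) in auto)
  then have "(\<Sum>B\<in>P. f B * indicator B x) = (\<Sum>B\<in>P. if B = B0 then f B0 else 0)"
    by (rule sum.cong[OF refl])
  with assms(2,3) show ?thesis
    by simp
qed

lemma subspace_code: "is_code I C \<Longrightarrow> V.subspace C"
  by (simp add: is_code_def)

lemma supported_on_code: "is_code I C \<Longrightarrow> c \<in> C \<Longrightarrow> supported_on I c"
  by (simp add: is_code_def)

lemma subspace_stabilizer:
  assumes "is_code I C"
  shows "V.subspace (stabilizer I C)"
  unfolding V.subspace_def
proof (intro conjI ballI allI)
  show "0 \<in> stabilizer I C"
    using V.subspace_0[OF subspace_code[OF assms]] by (simp add: stabilizer_def supported_on_def)
next
  fix w w' assume "w \<in> stabilizer I C" "w' \<in> stabilizer I C"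
  then show "w + w' \<in> stabilizer I C"
    using V.subspace_add[OF subspace_code[OF assms]]
    by (auto simp: stabilizer_def supported_on_def distrib_right)
next
  fix a w assume "w \<in> stabilizer I C"
  moreover have "scal a w * c = scal a (w * c)" for c
    by (simp add: fun_eq_iff mult.assoc)
  ultimately show "scal a w \<in> stabilizer I C"
    using V.subspace_scale[OF subspace_code[OF assms]]
    by (auto simp: stabilizer_def supported_on_def)
qed

lemma stabilizer_mult:
  assumes "w \<in> stabilizer I C" "w' \<in> stabilizer I C"
  shows "w * w' \<in> stabilizer I C"
  using assms by (auto simp: stabilizer_def supported_on_def mult.assoc)

lemma indicator_in_stabilizer:
  assumes "is_code I C"
  shows "indicator I \<in> stabilizer I C"
proof -
  have "indicator I * c = c" if "c \<in> C" for c
    using indicator_mult_supported_on[OF supported_on_code[OF assms that]] .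
  then show ?thesis
    by (auto simp: stabilizer_def supported_on_def)
qed

lemma lagrange_product_in_stabilizer:
  assumes code: "is_code I C" and w: "w \<in> stabilizer I C" and "finite F" "a \<notin> F"
  shows "(\<lambda>x. if x \<in> I then \<Prod>b\<in>F. (w x - b) / (a - b) else 0) \<in> stabilizer I C"
  using assms(3,4)
proof (induction F rule: finite_induct)
  case empty
  have "(\<lambda>x. if x \<in> I then \<Prod>b\<in>{}. (w x - b) / (a - b) else 0) = indicator I"
    by (simp add: fun_eq_iff)
  with indicator_in_stabilizer[OF code] show ?case
    by simp
next
  case (insert b F)
  let ?L = "\<lambda>F x. if x \<in> I then \<Prod>b\<in>F. (w x - b) / (a - b) else 0"
  have "w - scal b (indicator I) \<in> stabilizer I C"
    using subspace_stabilizer[OF code] w indicator_in_stabilizer[OF code]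
    by (intro V.subspace_diff V.subspace_scale)
  moreover have "?L F \<in> stabilizer I C"
    using insert.IH insert.prems by simp
  ultimately have "scal (1 / (a - b)) (?L F * (w - scal b (indicator I))) \<in> stabilizer I C"
    by (intro V.subspace_scale[OF subspace_stabilizer[OF code]] stabilizer_mult)
  moreover have "scal (1 / (a - b)) (?L F * (w - scal b (indicator I))) = ?L (insert b F)"
  proof
    fix x
    show "scal (1 / (a - b)) (?L F * (w - scal b (indicator I))) x = ?L (insert b F) x"
      using insert.hyps by (cases "x \<in> I") (simp_all add: divide_inverse mult_ac)
  qed
  ultimately show ?case
    by simp
qed

\<comment> \<open>The indicator of a level set of \<open>w\<close> is a Lagrange interpolation polynomial in \<open>w\<close>.\<close>
lemma level_set_in_stabilizer:
  assumes code: "is_code I C" and "finite I" and w: "w \<in> stabilizer I C"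
  shows "indicator {x \<in> I. w x = a} \<in> stabilizer I C"
proof -
  let ?L = "\<lambda>x. if x \<in> I then \<Prod>b\<in>w ` I - {a}. (w x - b) / (a - b) else 0"
  have "?L \<in> stabilizer I C"
    using \<open>finite I\<close> by (intro lagrange_product_in_stabilizer[OF code w]) auto
  moreover have "?L = indicator {x \<in> I. w x = a}"
  proof
    fix x
    consider "x \<notin> I" | "x \<in> I" "w x = a" | "x \<in> I" "w x \<noteq> a"
      by blast
    then show "?L x = indicator {x \<in> I. w x = a} x"
    proof cases
      case 2
      then show ?thesis
        by simp (rule prod.neutral, auto)
    next
      case 3
      then have "w x \<in> w ` I - {a}"
        by blast
      with 3 \<open>finite I\<close> show ?thesis
        by (simp add: prod_zero_iff) blast
    qed simp
  qed
  ultimately show ?thesis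
    by simp
qed

lemma proj_in_code_if_splits_along:
  assumes code: "is_code I C" and P: "partition_on I P" "splits_along I C P"
    and "B \<in> P" "c \<in> C"
  shows "proj B c \<in> C"
proof -
  have "proj B' (proj B c) \<in> proj B' ` C" if "B' \<in> P" for B'
  proof (cases "B' = B")
    case True
    with \<open>c \<in> C\<close> show ?thesis
      by (auto simp: proj_def fun_eq_iff)
  next
    case False
    with P(1) \<open>B \<in> P\<close> that have "B' \<inter> B = {}"
      by (intro disjointD[OF partition_onD2])
    then have "proj B' (proj B c) = proj B' 0"
      by (auto simp: proj_def fun_eq_iff)
    with V.subspace_0[OF subspace_code[OF code]] show ?thesis
      by auto
  qed
  moreover have "supported_on I (proj B c)"
    using supported_on_code[OF code \<open>c \<in> C\<close>] by (auto simp: supported_on_def proj_def)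
  ultimately show ?thesis
    using P(2) unfolding splits_along_def by blast
qed

lemma splits_along_iff_indicators_in_stabilizer:
  assumes code: "is_code I C" and "finite I" "partition_on I P"
  shows "splits_along I C P \<longleftrightarrow> (\<forall>B\<in>P. indicator B \<in> stabilizer I C)"
proof
  assume split: "splits_along I C P"
  show "\<forall>B\<in>P. indicator B \<in> stabilizer I C"
  proof
    fix B assume "B \<in> P"
    then have "B \<subseteq> I"
      using partition_onD1[OF assms(3)] by blast
    then have "supported_on I (indicator B)"
      by (rule supported_on_indicator)
    moreover have "indicator B * c \<in> C" if "c \<in> C" for c
      using proj_in_code_if_splits_along[OF code assms(3) split \<open>B \<in> P\<close> that]
      by (simp add: proj_eq_indicator_mult)
    ultimately show "indicator B \<in> stabilizer I C"
      by (simp add: stabilizer_def)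
  qed
next
  assume indicators: "\<forall>B\<in>P. indicator B \<in> stabilizer I C"
  have "v \<in> C" if v: "supported_on I v" "\<forall>B\<in>P. proj B v \<in> proj B ` C" for v
  proof -
    have "\<forall>B\<in>P. \<exists>c. c \<in> C \<and> proj B v = proj B c"
      using v(2) by blast
    then obtain c where c: "\<forall>B\<in>P. c B \<in> C \<and> proj B v = proj B (c B)"
      by (metis (no_types) bchoice)
    have "finite P"
      using assms(2,3) by (rule finite_elements)
    have "v = (\<Sum>B\<in>P. indicator B) * v"
      by (simp add: sum_indicators_partition[OF assms(3) \<open>finite P\<close>]
          indicator_mult_supported_on[OF v(1)])
    also have "\<dots> = (\<Sum>B\<in>P. indicator B * c B)"
      using c by (simp add: sum_distrib_right proj_eq_indicator_mult)
    also have "\<dots> \<in> C"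
      using indicators c by (intro V.subspace_sum[OF subspace_code[OF code]]) (auto simp: stabilizer_def)
    finally show ?thesis .
  qed
  then show "splits_along I C P"
    using supported_on_code[OF code] by (auto simp: splits_along_def)
qed

lemma decomposable_iff_indicator_in_stabilizer:
  assumes code: "is_code I C" and "finite I"
  shows "decomposable I C \<longleftrightarrow> (\<exists>S. S \<noteq> {} \<and> S \<subset> I \<and> indicator S \<in> stabilizer I C)"
proof
  assume "decomposable I C"
  then obtain S T where ST: "S \<noteq> {}" "T \<noteq> {}" "S \<inter> T = {}" "S \<union> T = I"
    and split: "splits_along I C {S, T}"
    by (auto simp: decomposable_def)
  then have "partition_on I {S, T}"
    by (intro partition_onI) (auto simp: disjnt_def)
  with split have "indicator S \<in> stabilizer I C"
    using splits_along_iff_indicators_in_stabilizer[OF code \<open>finite I\<close>] by simp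
  moreover have "S \<subset> I"
    using ST by blast
  ultimately show "\<exists>S. S \<noteq> {} \<and> S \<subset> I \<and> indicator S \<in> stabilizer I C"
    using ST(1) by blast
next
  assume "\<exists>S. S \<noteq> {} \<and> S \<subset> I \<and> indicator S \<in> stabilizer I C"
  then obtain S where S: "S \<noteq> {}" "S \<subset> I" "indicator S \<in> stabilizer I C"
    by blast
  have "indicator (I - S) = (indicator I - indicator S :: nat \<Rightarrow> 'a)"
    using S(2) by (intro indicator_diff_subset) blast
  also have "\<dots> \<in> stabilizer I C"
    using S(3) indicator_in_stabilizer[OF code] by (intro V.subspace_diff[OF subspace_stabilizer[OF code]])
  finally have "indicator (I - S) \<in> stabilizer I C" .
  moreover have "partition_on I {S, I - S}"
    using S(1,2) by (intro partition_onI) (auto simp: disjnt_def)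
  ultimately have "splits_along I C {S, I - S}"
    using S(3) splits_along_iff_indicators_in_stabilizer[OF code \<open>finite I\<close>] by simp
  with S(1,2) show "decomposable I C"
    unfolding decomposable_def by (intro exI[of _ S] exI[of _ "I - S"]) auto
qed

lemma is_code_proj:
  assumes "is_code I C"
  shows "is_code B (proj B ` C)"
proof -
  have C: "V.subspace C"
    using assms by (rule subspace_code)
  have "V.subspace (proj B ` C)"
    unfolding V.subspace_def
  proof (intro conjI ballI allI)
    show "0 \<in> proj B ` C"
      using V.subspace_0[OF C] by (intro image_eqI[of _ _ 0]) (auto simp: proj_def fun_eq_iff)
  next
    fix u v assume "u \<in> proj B ` C" "v \<in> proj B ` C"
    then obtain x y where "x \<in> C" "y \<in> C" "u = proj B x" "v = proj B y"
      by blast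
    then show "u + v \<in> proj B ` C"
      using V.subspace_add[OF C] by (intro image_eqI[of _ _ "x + y"]) (auto simp: proj_def fun_eq_iff)
  next
    fix a u assume "u \<in> proj B ` C"
    then obtain x where "x \<in> C" "u = proj B x"
      by blast
    then show "scal a u \<in> proj B ` C"
      using V.subspace_scale[OF C] by (intro image_eqI[of _ _ "scal a x"]) (auto simp: proj_def fun_eq_iff)
  qed
  then show ?thesis
    by (auto simp: is_code_def supported_on_def proj_def)
qed

lemma stabilizer_proj:
  assumes code: "is_code I C" and B: "B \<subseteq> I" "indicator B \<in> stabilizer I C"
  shows "stabilizer B (proj B ` C) = {w \<in> stabilizer I C. supported_on B w}"
proof (intro equalityI subsetI)
  fix w assume w: "w \<in> stabilizer B (proj B ` C)"
  have "w * c \<in> C" if c: "c \<in> C" for c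
  proof -
    have "w * c = w * proj B c"
      using w by (simp add: stabilizer_def proj_eq_indicator_mult indicator_mult_supported_on
          mult.assoc[symmetric] mult.commute[of w])
    also obtain c' where "c' \<in> C" "w * proj B c = proj B c'"
      using w c by (auto simp: stabilizer_def)
    moreover have "proj B c' \<in> C"
      using B(2) \<open>c' \<in> C\<close> by (simp add: stabilizer_def proj_eq_indicator_mult)
    ultimately show ?thesis
      by simp
  qed
  with w B(1) show "w \<in> {w \<in> stabilizer I C. supported_on B w}"
    by (auto simp: stabilizer_def supported_on_def)
next
  fix w assume w: "w \<in> {w \<in> stabilizer I C. supported_on B w}"
  have "w * proj B c = proj B (w * c)" for c
    by (simp add: proj_eq_indicator_mult mult.left_commute)
  with w show "w \<in> stabilizer B (proj B ` C)"
    by (auto simp: stabilizer_def)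
qed

lemma stabilizer_constant_if_indecomposable:
  assumes code: "is_code I C" and "finite I" and indecomposable: "\<not> decomposable I C"
    and w: "w \<in> stabilizer I C" and "x \<in> I" "x' \<in> I"
  shows "w x = w x'"
proof (rule ccontr)
  let ?S = "{y \<in> I. w y = w x}"
  assume "w x \<noteq> w x'"
  then have "x' \<notin> ?S"
    by simp
  with \<open>x' \<in> I\<close> have "?S \<subset> I"
    by (metis (no_types, lifting) mem_Collect_eq psubsetI subsetI)
  moreover have "?S \<noteq> {}"
    using \<open>x \<in> I\<close> by blast
  moreover have "indicator ?S \<in> stabilizer I C"
    using code \<open>finite I\<close> w by (rule level_set_in_stabilizer)
  ultimately have "decomposable I C"
    unfolding decomposable_iff_indicator_in_stabilizer[OF code \<open>finite I\<close>] by (intro exI conjI)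
  with indecomposable show False ..
qed

lemma stabilizer_constant_on_blocks:
  assumes code: "is_code I C" and "finite I" and P: "indecomposable_decomposition I C P"
    and w: "w \<in> stabilizer I C" and B: "B \<in> P" and "x \<in> B" "x' \<in> B"
  shows "w x = w x'"
proof -
  have partition: "partition_on I P" and split: "splits_along I C P"
    using P by (auto simp: indecomposable_decomposition_def)
  have "B \<subseteq> I"
    using partition_onD1[OF partition] B by blast
  moreover have indicator_B: "indicator B \<in> stabilizer I C"
    using splits_along_iff_indicators_in_stabilizer[OF code \<open>finite I\<close> partition] split B by simp
  moreover have "supported_on B (indicator B * w)"
    by (auto simp: supported_on_def)
  ultimately have "indicator B * w \<in> stabilizer B (proj B ` C)"
    using stabilizer_mult[OF indicator_B w] by (simp add: stabilizer_proj[OF code])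
  moreover have "\<not> decomposable B (proj B ` C)"
    using P B by (simp add: indecomposable_decomposition_def)
  moreover have "finite B"
    using \<open>B \<subseteq> I\<close> \<open>finite I\<close> by (rule finite_subset)
  ultimately have "(indicator B * w) x = (indicator B * w) x'"
    using is_code_proj[OF code] \<open>x \<in> B\<close> \<open>x' \<in> B\<close>
    by (intro stabilizer_constant_if_indecomposable)
  with \<open>x \<in> B\<close> \<open>x' \<in> B\<close> show ?thesis
    by simp
qed

lemma stabilizer_subset_span_block_indicators:
  assumes code: "is_code I C" and "finite I" and P: "indecomposable_decomposition I C P"
  shows "stabilizer I C \<subseteq> V.span (indicator ` P)"
proof
  fix w assume w: "w \<in> stabilizer I C"
  have partition: "partition_on I P"
    using P by (simp add: indecomposable_decomposition_def)
  have "finite P"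
    using \<open>finite I\<close> partition by (rule finite_elements)
  define rep where "rep B = (SOME x. x \<in> B)" for B :: "nat set"
  have rep: "rep B \<in> B" if "B \<in> P" for B
    using partition_onD3[OF partition] that unfolding rep_def by (metis ex_in_conv someI_ex)
  have "w = (\<Sum>B\<in>P. scal (w (rep B)) (indicator B))"
  proof
    fix x
    show "w x = (\<Sum>B\<in>P. scal (w (rep B)) (indicator B)) x"
    proof (cases "x \<in> I")
      case True
      then obtain B where B: "B \<in> P" "x \<in> B"
        using partition_onD1[OF partition] by blast
      then have "w x = w (rep B)"
        using stabilizer_constant_on_blocks[OF assms w] rep by blast
      with B show ?thesis
        by (simp add: sum_fun_apply sum_indicators_partition_apply[OF partition \<open>finite P\<close>])
    next
      case False
      then have "x \<notin> B" if "B \<in> P" for B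
        using partition_onD1[OF partition] that by blast
      then have "(\<Sum>B\<in>P. w (rep B) * indicator B x) = 0"
        by (intro sum.neutral ballI) simp
      with False w show ?thesis
        by (simp add: sum_fun_apply stabilizer_def supported_on_def)
    qed
  qed
  also have "\<dots> \<in> V.span (indicator ` P)"
    by (intro V.span_sum V.span_scale V.span_base) simp
  finally show "w \<in> V.span (indicator ` P)" .
qed

lemma dim_stabilizer_eq_card:
  assumes code: "is_code I C" and "finite I" and P: "indecomposable_decomposition I C P"
  shows "V.dim (stabilizer I C) = card P"
proof -
  have partition: "partition_on I P"
    using P by (simp add: indecomposable_decomposition_def)
  then have "finite P"
    using \<open>finite I\<close> by (intro finite_elements)
  have sub: "indicator ` P \<subseteq> stabilizer I C"
    using splits_along_iff_indicators_in_stabilizer[OF code \<open>finite I\<close> partition] P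
    by (auto simp: indecomposable_decomposition_def)
  have span: "stabilizer I C \<subseteq> V.span (indicator ` P)"
    using assms by (rule stabilizer_subset_span_block_indicators)
  have indep: "V.independent (indicator ` P)"
    using \<open>finite P\<close> partition_onD2[OF partition] partition_onD3[OF partition]
    by (rule independent_indicators)
  have "card (indicator ` P :: (nat \<Rightarrow> 'a) set) = V.dim (stabilizer I C)"
    using V.basis_card_eq_dim[OF sub span indep] .
  then show ?thesis
    by (simp add: card_image[OF inj_on_indicator])
qed

lemma partition_on_split_block:
  assumes P: "partition_on I P" "finite P" and B: "B \<in> P" and S: "S \<noteq> {}" "S \<subset> B"
  shows "partition_on I (insert S (insert (B - S) (P - {B})))"
    and "card (insert S (insert (B - S) (P - {B}))) = Suc (card P)"
proof -
  have disjoint_B: "B' \<inter> B = {}" if "B' \<in> P - {B}" for B'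
    using that B by (intro disjointD[OF partition_onD2[OF P(1)]]) auto
  have new_blocks: "S \<notin> P - {B}" "B - S \<notin> P - {B}" "S \<noteq> B - S"
    using disjoint_B[of S] disjoint_B[of "B - S"] S by auto
  show "partition_on I (insert S (insert (B - S) (P - {B})))"
  proof (rule partition_onI)
    show "\<Union>(insert S (insert (B - S) (P - {B}))) = I"
      using partition_onD1[OF P(1)] B S(2) by blast
  next
    fix p q assume p: "p \<in> insert S (insert (B - S) (P - {B}))"
      and q: "q \<in> insert S (insert (B - S) (P - {B}))" and "p \<noteq> q"
    consider "p \<in> {S, B - S}" "q \<in> {S, B - S}" | "p \<in> {S, B - S}" "q \<in> P - {B}"
      | "p \<in> P - {B}" "q \<in> {S, B - S}" | "p \<in> P - {B}" "q \<in> P - {B}"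
      using p q by blast
    then show "disjnt p q"
    proof cases
      case 1
      with \<open>p \<noteq> q\<close> show ?thesis
        by (auto simp: disjnt_def)
    next
      case 2
      with disjoint_B[of q] S(2) show ?thesis
        by (auto simp: disjnt_def)
    next
      case 3
      with disjoint_B[of p] S(2) show ?thesis
        by (auto simp: disjnt_def)
    next
      case 4
      with \<open>p \<noteq> q\<close> show ?thesis
        using disjointD[OF partition_onD2[OF P(1)]] by (auto simp: disjnt_def)
    qed
  next
    show "{} \<notin> insert S (insert (B - S) (P - {B}))"
      using partition_onD3[OF P(1)] S by auto
  qed
  have "card P = Suc (card (P - {B}))"
    using card_Suc_Diff1[OF P(2) B] ..
  with new_blocks P(2) show "card (insert S (insert (B - S) (P - {B}))) = Suc (card P)"
    by simp
qed

lemma refine_splitting: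
  assumes code: "is_code I C" and "finite I" and partition: "partition_on I P"
    and split: "splits_along I C P" and B: "B \<in> P" and "decomposable B (proj B ` C)"
  obtains Q where "partition_on I Q" "splits_along I C Q" "card Q = Suc (card P)"
proof -
  have indicators_P: "\<forall>B\<in>P. indicator B \<in> stabilizer I C"
    using splits_along_iff_indicators_in_stabilizer[OF code \<open>finite I\<close> partition] split by simp
  then have indicator_B: "indicator B \<in> stabilizer I C"
    using B ..
  have "B \<subseteq> I" "finite B"
    using partition_onD1[OF partition] B \<open>finite I\<close> by (auto intro: finite_subset)
  then obtain S where S: "S \<noteq> {}" "S \<subset> B" "indicator S \<in> stabilizer B (proj B ` C)"
    using decomposable_iff_indicator_in_stabilizer[OF is_code_proj[OF code] \<open>finite B\<close>]
      \<open>decomposable B (proj B ` C)\<close> by blast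
  then have indicator_S: "indicator S \<in> stabilizer I C"
    by (simp add: stabilizer_proj[OF code \<open>B \<subseteq> I\<close> indicator_B])
  have "indicator (B - S) = (indicator B - indicator S :: nat \<Rightarrow> 'a)"
    using S(2) by (intro indicator_diff_subset) blast
  also have "\<dots> \<in> stabilizer I C"
    using indicator_B indicator_S by (rule V.subspace_diff[OF subspace_stabilizer[OF code]])
  finally have "indicator (B - S) \<in> stabilizer I C" .
  with indicator_S indicators_P
  have indicators: "\<forall>B'\<in>insert S (insert (B - S) (P - {B})). indicator B' \<in> stabilizer I C"
    by blast
  have "finite P"
    using \<open>finite I\<close> partition by (rule finite_elements)
  note refined = partition_on_split_block[OF partition this B S(1,2)]
  have "splits_along I C (insert S (insert (B - S) (P - {B})))"
    using indicators splits_along_iff_indicators_in_stabilizer[OF code \<open>finite I\<close> refined(1)] by simp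
  with refined show thesis
    using that by blast
qed

lemma exists_indecomposable_decomposition:
  assumes code: "is_code I C" and "finite I" "I \<noteq> {}"
  obtains P where "indecomposable_decomposition I C P"
proof -
  define \<Phi> where "\<Phi> = {P. partition_on I P \<and> splits_along I C P}"
  have "finite \<Phi>"
    using finitely_many_partition_on[OF \<open>finite I\<close>] by (rule finite_subset[rotated]) (auto simp: \<Phi>_def)
  moreover have "{I} \<in> \<Phi>"
    using partition_on_space[OF \<open>I \<noteq> {}\<close>] indicator_in_stabilizer[OF code]
      splits_along_iff_indicators_in_stabilizer[OF code \<open>finite I\<close>] by (simp add: \<Phi>_def)
  ultimately have "Max (card ` \<Phi>) \<in> card ` \<Phi>"
    by (intro Max_in) auto
  then obtain P where P: "P \<in> \<Phi>" "card P = Max (card ` \<Phi>)"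
    by (rule imageE) simp
  have maximal: "card Q \<le> card P" if "Q \<in> \<Phi>" for Q
    using Max_ge[OF finite_imageI[OF \<open>finite \<Phi>\<close>] imageI[OF that]] P(2) by simp
  have partition: "partition_on I P" and split: "splits_along I C P"
    using P(1) by (auto simp: \<Phi>_def)
  have "\<not> decomposable B (proj B ` C)" if B: "B \<in> P" for B
  proof
    assume "decomposable B (proj B ` C)"
    then obtain Q where "Q \<in> \<Phi>" "card Q = Suc (card P)"
      using refine_splitting[OF code \<open>finite I\<close> partition split B] by (auto simp: \<Phi>_def)
    with maximal show False
      by (metis Suc_n_not_le_n)
  qed
  with partition split show thesis
    by (intro that[of P]) (simp add: indecomposable_decomposition_def)
qed

lemma nb_eq_dim_stabilizer:
  assumes "is_code I C" "finite I" "I \<noteq> {}"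
  shows "nb I C = V.dim (stabilizer I C)"
proof -
  obtain P0 where "indecomposable_decomposition I C P0"
    using exists_indecomposable_decomposition[OF assms] .
  then have "\<exists>m P. indecomposable_decomposition I C P \<and> card P = m"
    by blast
  then have "\<exists>P. indecomposable_decomposition I C P \<and> card P = nb I C"
    unfolding nb_def by (rule someI_ex)
  then show ?thesis
    using dim_stabilizer_eq_card[OF assms(1,2)] by metis
qed

section \<open>The Schur square of a self-dual code\<close>

lemma schur_square_eq_span_products:
  "schur_square C = V.span {u * v | u v. u \<in> C \<and> v \<in> C}"
  by (simp add: schur_square_def times_fun_def)

lemma dual_code_products_eq_stabilizer:
  assumes "self_dual n C"
  shows "dual_code n {u * v | u v. u \<in> C \<and> v \<in> C} = stabilizer {..<n} C"
proof -
  have key: "w * u \<in> C \<longleftrightarrow> (\<forall>v\<in>C. dot n w (u * v) = 0)" if "supported_on {..<n} w" for w u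
  proof -
    have "w * u \<in> C \<longleftrightarrow> w * u \<in> dual_code n C"
      using assms by (simp add: self_dual_def)
    also have "\<dots> \<longleftrightarrow> (\<forall>v\<in>C. dot n w (u * v) = 0)"
      using that by (simp add: dual_code_def supported_on_def dot_mult_left)
    finally show ?thesis .
  qed
  show ?thesis
  proof (rule Set.set_eqI)
    fix w
    show "w \<in> dual_code n {u * v | u v. u \<in> C \<and> v \<in> C} \<longleftrightarrow> w \<in> stabilizer {..<n} C"
      unfolding dual_code_def stabilizer_def mem_Collect_eq using key[of w] by blast
  qed
qed

lemma dim_schur_square_add_nb:
  assumes "self_dual n C" "n > 0"
  shows "vdim (schur_square C) + nb {..<n} C = n"
proof -
  have code: "is_code {..<n} C"
    using assms(1) by (simp add: self_dual_def)
  have "{u * v | u v. u \<in> C \<and> v \<in> C} \<subseteq> {v. supported_on {..<n} v}"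
    using supported_on_code[OF code] by (auto simp: supported_on_def)
  then have "schur_square C \<subseteq> {v. supported_on {..<n} v}"
    unfolding schur_square_eq_span_products by (rule V.span_minimal[OF _ subspace_supported_on])
  then have "V.dim (schur_square C) + V.dim (dual_code n (schur_square C)) = n"
    by (rule dim_add_dim_dual_code)
  moreover have "dual_code n (schur_square C) = stabilizer {..<n} C"
    by (simp add: schur_square_eq_span_products dual_code_products_eq_stabilizer[OF assms(1)])
  moreover have "nb {..<n} C = V.dim (stabilizer {..<n} C)"
    using assms(2) by (intro nb_eq_dim_stabilizer[OF code]) auto
  ultimately show ?thesis
    by (simp add: vdim_def)
qed

section \<open>Linear relations over the algebraic closure\<close>

lemma (in vector_space) exists_independent_subfamily:
  obtains T where "T \<subseteq> P" "inj_on f T" "independent (f ` T)" "f ` P \<subseteq> span (f ` T)"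
proof -
  obtain B where B: "B \<subseteq> f ` P" "independent B" "f ` P \<subseteq> span B"
    using maximal_independent_subset[of "f ` P"] by blast
  define T where "T = inv_into P f ` B"
  have inverse: "f (inv_into P f b) = b" if "b \<in> B" for b
    using B(1) that by (simp add: f_inv_into_f subset_iff)
  have "f ` T = B"
    using inverse by (force simp: T_def)
  moreover have "inj_on f T"
    using inverse by (auto simp: T_def inj_on_def)
  moreover have "T \<subseteq> P"
    using B(1) by (auto simp: T_def inv_into_into)
  ultimately show thesis
    using B(2,3) by (intro that) auto
qed

lemma to_ac_independent:
  assumes "finite T" "inj_on m T" "V.independent (m ` T)" "\<forall>t\<in>T. supported_on {..<n} (m t)"
    and relation: "\<forall>j<n. (\<Sum>t\<in>T. b t * to_ac (m t j)) = 0" and "s \<in> T"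
  shows "b s = 0"
proof -
  have "m ` T \<subseteq> {v. supported_on {..<n} v}"
    using assms(4) by blast
  then obtain y where "\<forall>v\<in>m ` T. supported_on {..<n} (y v)"
    and y: "\<forall>v\<in>m ` T. \<forall>v'\<in>m ` T. dot n v (y v') = (if v = v' then 1 else 0)"
    by (rule exists_dual_family[OF assms(3)])
  have "0 = (\<Sum>j<n. (\<Sum>t\<in>T. b t * to_ac (m t j)) * to_ac (y (m s) j))"
    using relation by simp
  also have "\<dots> = (\<Sum>t\<in>T. b t * to_ac (dot n (m t) (y (m s))))"
    by (simp add: dot_def to_ac_sum sum_distrib_left sum_distrib_right sum.swap[of _ T] mult.assoc)
  also have "\<dots> = (\<Sum>t\<in>T. if t = s then b s else 0)"
    using y \<open>s \<in> T\<close> inj_onD[OF assms(2)] by (intro sum.cong) auto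
  also have "\<dots> = b s"
    using assms(1) \<open>s \<in> T\<close> by simp
  finally show ?thesis ..
qed

interpretation VQ: vector_space "scalQ :: 'b::field \<Rightarrow> (nat \<Rightarrow> nat \<Rightarrow> 'b) \<Rightarrow> nat \<Rightarrow> nat \<Rightarrow> 'b"
  by unfold_locales (auto simp: scalQ_def fun_eq_iff algebra_simps)

lemma scalQ_apply [simp]: "scalQ c Q i l = c * Q i l"
  by (simp add: scalQ_def)

\<comment> \<open>Coefficients are stored like those of a quadratic form: \<open>Q i l\<close> multiplies \<open>m (i, l)\<close>.\<close>
definition linear_relations ::
  "(nat \<times> nat) set \<Rightarrow> (nat \<times> nat \<Rightarrow> nat \<Rightarrow> 'a::field) \<Rightarrow> nat \<Rightarrow> (nat \<Rightarrow> nat \<Rightarrow> 'a alg_closure) set"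
  where "linear_relations P m n =
    {Q. (\<forall>i l. (i, l) \<notin> P \<longrightarrow> Q i l = 0) \<and> (\<forall>j<n. (\<Sum>p\<in>P. Q (fst p) (snd p) * to_ac (m p j)) = 0)}"

context
  fixes P T :: "(nat \<times> nat) set" and m :: "nat \<times> nat \<Rightarrow> nat \<Rightarrow> 'a::field" and n :: nat
    and coef :: "nat \<times> nat \<Rightarrow> nat \<times> nat \<Rightarrow> 'a"
  assumes finite_P: "finite P" and T_subset: "T \<subseteq> P"
    and expansion: "\<And>p j. p \<in> P \<Longrightarrow> m p j = (\<Sum>t\<in>T. coef p t * m t j)"
    and independent_T: "\<And>b t. \<forall>j<n. (\<Sum>t\<in>T. b t * to_ac (m t j)) = 0 \<Longrightarrow> t \<in> T \<Longrightarrow> b t = 0"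
begin

\<comment> \<open>The relation \<open>m p - (\<Sum>t\<in>T. coef p t * m t) = 0\<close>, as a coefficient array.\<close>
definition basic_relation :: "nat \<times> nat \<Rightarrow> nat \<Rightarrow> nat \<Rightarrow> 'a alg_closure" where
  "basic_relation p i l =
    (if (i, l) = p then 1 else 0) - (if (i, l) \<in> T then to_ac (coef p (i, l)) else 0)"

lemma basic_relation_free_entry:
  "q \<notin> T \<Longrightarrow> basic_relation p (fst q) (snd q) = (if q = p then 1 else 0)"
  by (simp add: basic_relation_def)

lemma basic_relation_in_linear_relations:
  assumes p: "p \<in> P - T"
  shows "basic_relation p \<in> linear_relations P m n"
proof -
  have finite_T: "finite T"
    using finite_subset[OF T_subset finite_P] .
  have "(\<Sum>q\<in>P. basic_relation p (fst q) (snd q) * to_ac (m q j)) = 0" for j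
  proof -
    have "basic_relation p (fst q) (snd q) * to_ac (m q j) =
        (if q = p then to_ac (m q j) else 0) - (if q \<in> T then to_ac (coef p q) * to_ac (m q j) else 0)"
      for q
      by (simp add: basic_relation_def left_diff_distrib)
    then have "(\<Sum>q\<in>P. basic_relation p (fst q) (snd q) * to_ac (m q j)) =
        (\<Sum>q\<in>P. if q = p then to_ac (m q j) else 0) -
        (\<Sum>q\<in>P. if q \<in> T then to_ac (coef p q) * to_ac (m q j) else 0)"
      by (simp add: sum_subtractf)
    also have "(\<Sum>q\<in>P. if q \<in> T then to_ac (coef p q) * to_ac (m q j) else 0) =
        (\<Sum>t\<in>T. to_ac (coef p t) * to_ac (m t j))"
      using sum.inter_restrict[OF finite_P, of "\<lambda>q. to_ac (coef p q) * to_ac (m q j)" T]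
      by (simp add: Int_absorb1[OF T_subset])
    also have "(\<Sum>q\<in>P. if q = p then to_ac (m q j) else 0) - (\<Sum>t\<in>T. to_ac (coef p t) * to_ac (m t j)) =
        to_ac (m p j - (\<Sum>t\<in>T. coef p t * m t j))"
      using p finite_P by (simp add: to_ac_sum)
    also have "\<dots> = 0"
      using p expansion by simp
    finally show ?thesis .
  qed
  moreover have "basic_relation p i l = 0" if "(i, l) \<notin> P" for i l
    using that p T_subset by (auto simp: basic_relation_def)
  ultimately show ?thesis
    by (simp add: linear_relations_def)
qed

lemma inj_on_basic_relation: "inj_on basic_relation (P - T)"
proof (rule inj_onI)
  fix p q assume "p \<in> P - T" "q \<in> P - T" "basic_relation p = basic_relation q"
  then have "basic_relation p (fst q) (snd q) = basic_relation q (fst q) (snd q)"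
    by simp
  with \<open>q \<in> P - T\<close> show "p = q"
    by (simp add: basic_relation_free_entry split: if_splits)
qed

lemma independent_basic_relations: "VQ.independent (basic_relation ` (P - T))"
proof (rule VQ.independent_if_scalars_zero)
  show "finite (basic_relation ` (P - T))"
    using finite_P by simp
  fix f :: "(nat \<Rightarrow> nat \<Rightarrow> 'a alg_closure) \<Rightarrow> 'a alg_closure" and R
  assume sum0: "(\<Sum>R\<in>basic_relation ` (P - T). scalQ (f R) R) = 0"
    and "R \<in> basic_relation ` (P - T)"
  then obtain q where q: "q \<in> P - T" "R = basic_relation q"
    by blast
  have "f R' * R' (fst q) (snd q) = (if R' = R then f R else 0)"
    if R': "R' \<in> basic_relation ` (P - T)" for R'
  proof -
    obtain p where p: "p \<in> P - T" "R' = basic_relation p"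
      using R' by blast
    then have "R' = R \<longleftrightarrow> q = p"
      using q inj_onD[OF inj_on_basic_relation, of p q] by auto
    with p q show ?thesis
      by (simp add: basic_relation_free_entry)
  qed
  then have "(\<Sum>R'\<in>basic_relation ` (P - T). scalQ (f R') R') (fst q) (snd q) = f R"
    using q finite_P by (simp add: sum_fun_apply)
  with sum0 show "f R = 0"
    by simp
qed

lemma linear_relation_entry_in_T:
  assumes Q: "Q \<in> linear_relations P m n" and t: "t \<in> T"
  shows "Q (fst t) (snd t) = - (\<Sum>p\<in>P - T. Q (fst p) (snd p) * to_ac (coef p t))"
proof -
  let ?b = "\<lambda>t. Q (fst t) (snd t) + (\<Sum>p\<in>P - T. Q (fst p) (snd p) * to_ac (coef p t))"
  have "(\<Sum>t\<in>T. ?b t * to_ac (m t j)) = 0" if "j < n" for j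
  proof -
    have "(\<Sum>p\<in>P - T. Q (fst p) (snd p) * to_ac (m p j)) =
        (\<Sum>p\<in>P - T. \<Sum>t\<in>T. Q (fst p) (snd p) * to_ac (coef p t) * to_ac (m t j))"
    proof (rule sum.cong[OF refl])
      fix p assume "p \<in> P - T"
      then have "m p j = (\<Sum>t\<in>T. coef p t * m t j)"
        by (intro expansion) simp
      then show "Q (fst p) (snd p) * to_ac (m p j) =
          (\<Sum>t\<in>T. Q (fst p) (snd p) * to_ac (coef p t) * to_ac (m t j))"
        by (simp add: to_ac_sum sum_distrib_left mult.assoc)
    qed
    also have "\<dots> = (\<Sum>t\<in>T. \<Sum>p\<in>P - T. Q (fst p) (snd p) * to_ac (coef p t) * to_ac (m t j))"
      by (rule sum.swap)
    finally have expanded: "(\<Sum>p\<in>P - T. Q (fst p) (snd p) * to_ac (m p j)) =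
        (\<Sum>t\<in>T. \<Sum>p\<in>P - T. Q (fst p) (snd p) * to_ac (coef p t) * to_ac (m t j))" .
    have "0 = (\<Sum>q\<in>P. Q (fst q) (snd q) * to_ac (m q j))"
      using Q that by (simp add: linear_relations_def)
    also have "\<dots> = (\<Sum>t\<in>T. Q (fst t) (snd t) * to_ac (m t j)) +
        (\<Sum>p\<in>P - T. Q (fst p) (snd p) * to_ac (m p j))"
      using sum.subset_diff[OF T_subset finite_P] by (simp add: add.commute)
    also have "\<dots> = (\<Sum>t\<in>T. ?b t * to_ac (m t j))"
      by (simp add: expanded distrib_right sum.distrib sum_distrib_right)
    finally show ?thesis ..
  qed
  then have "?b t = 0"
    using independent_T[of ?b t] t by blast
  then show ?thesis
    by (simp add: eq_neg_iff_add_eq_0)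
qed

lemma linear_relations_subset_span:
  "linear_relations P m n \<subseteq> VQ.span (basic_relation ` (P - T))"
proof
  fix Q assume Q: "Q \<in> linear_relations P m n"
  have entry: "Q (fst q) (snd q) = (\<Sum>p\<in>P - T. Q (fst p) (snd p) * basic_relation p (fst q) (snd q))"
    for q
  proof (cases "q \<in> T")
    case True
    then have "(\<Sum>p\<in>P - T. Q (fst p) (snd p) * basic_relation p (fst q) (snd q)) =
        (\<Sum>p\<in>P - T. - (Q (fst p) (snd p) * to_ac (coef p q)))"
      by (intro sum.cong refl) (auto simp: basic_relation_def)
    with linear_relation_entry_in_T[OF Q True] show ?thesis
      by (simp add: sum_negf)
  next
    case False
    then have "(\<Sum>p\<in>P - T. Q (fst p) (snd p) * basic_relation p (fst q) (snd q)) =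
        (\<Sum>p\<in>P - T. if q = p then Q (fst q) (snd q) else 0)"
      by (intro sum.cong refl) (simp add: basic_relation_free_entry)
    also have "\<dots> = (if q \<in> P - T then Q (fst q) (snd q) else 0)"
      using finite_P by simp
    also have "\<dots> = Q (fst q) (snd q)"
      using Q False by (auto simp: linear_relations_def)
    finally show ?thesis ..
  qed
  have "Q = (\<Sum>p\<in>P - T. scalQ (Q (fst p) (snd p)) (basic_relation p))"
  proof (intro ext)
    fix i l
    have "(\<Sum>p\<in>P - T. scalQ (Q (fst p) (snd p)) (basic_relation p)) i l =
        (\<Sum>p\<in>P - T. Q (fst p) (snd p) * basic_relation p i l)"
      by (simp add: sum_fun_apply)
    with entry[of "(i, l)"] show "Q i l = (\<Sum>p\<in>P - T. scalQ (Q (fst p) (snd p)) (basic_relation p)) i l"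
      by simp
  qed
  also have "\<dots> \<in> VQ.span (basic_relation ` (P - T))"
    by (intro VQ.span_sum VQ.span_scale VQ.span_base) simp
  finally show "Q \<in> VQ.span (basic_relation ` (P - T))" .
qed

lemma qdim_linear_relations: "qdim (linear_relations P m n) = card (P - T)"
proof -
  have "basic_relation ` (P - T) \<subseteq> linear_relations P m n"
    using basic_relation_in_linear_relations by blast
  then have "card (basic_relation ` (P - T)) = qdim (linear_relations P m n)"
    unfolding qdim_def
    using linear_relations_subset_span independent_basic_relations by (rule VQ.basis_card_eq_dim)
  then show ?thesis
    by (simp add: card_image[OF inj_on_basic_relation])
qed

end

lemma dim_linear_relations:
  assumes "finite P" "\<forall>p\<in>P. supported_on {..<n} (m p)"
  shows "qdim (linear_relations P m n) + vdim (m ` P) = card P"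
proof -
  obtain T where T: "T \<subseteq> P" "inj_on m T" "V.independent (m ` T)" "m ` P \<subseteq> V.span (m ` T)"
    by (rule V.exists_independent_subfamily)
  have "finite T"
    using T(1) assms(1) by (rule finite_subset)
  have "card (m ` T) = vdim (m ` P)"
    unfolding vdim_def using image_mono[OF T(1)] T(4,3) by (rule V.basis_card_eq_dim)
  then have vdim: "vdim (m ` P) = card T"
    using card_image[OF T(2)] by simp
  have "\<forall>p\<in>P. \<exists>c. \<forall>j. m p j = (\<Sum>t\<in>T. c t * m t j)"
  proof
    fix p assume "p \<in> P"
    then have "m p \<in> range (\<lambda>u. \<Sum>v\<in>m ` T. scal (u v) v)"
      using T(4) V.span_finite[OF finite_imageI[OF \<open>finite T\<close>]] by blast
    then obtain u where "m p = (\<Sum>v\<in>m ` T. scal (u v) v)"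
      by (rule rangeE)
    then show "\<exists>c. \<forall>j. m p j = (\<Sum>t\<in>T. c t * m t j)"
      by (intro exI[of _ "\<lambda>t. u (m t)"]) (simp add: sum_fun_apply sum.reindex[OF T(2)])
  qed
  then obtain coef where "\<forall>p\<in>P. \<forall>j. m p j = (\<Sum>t\<in>T. coef p t * m t j)"
    by (metis (no_types) bchoice)
  then have coef: "\<And>p j. p \<in> P \<Longrightarrow> m p j = (\<Sum>t\<in>T. coef p t * m t j)"
    by blast
  have "\<forall>t\<in>T. supported_on {..<n} (m t)"
    using assms(2) T(1) by blast
  note independent = to_ac_independent[OF \<open>finite T\<close> T(2,3) this]
  have "qdim (linear_relations P m n) = card (P - T)"
    using assms(1) T(1) coef independent by (rule qdim_linear_relations)
  moreover have "card (P - T) = card P - card T"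
    using \<open>finite T\<close> T(1) by (rule card_Diff_subset)
  moreover have "card T \<le> card P"
    using assms(1) T(1) by (rule card_mono)
  ultimately show ?thesis
    using vdim by simp
qed

section \<open>Quadrics through the columns of a generator matrix\<close>

definition row :: "nat \<Rightarrow> (nat \<Rightarrow> nat \<Rightarrow> 'a::zero) \<Rightarrow> nat \<Rightarrow> nat \<Rightarrow> 'a" where
  "row n G i = (\<lambda>j. if j < n then G i j else 0)"

definition row_product :: "nat \<Rightarrow> (nat \<Rightarrow> nat \<Rightarrow> 'a::field) \<Rightarrow> nat \<times> nat \<Rightarrow> nat \<Rightarrow> 'a" where
  "row_product n G p = row n G (fst p) * row n G (snd p)"

definition pairs :: "nat \<Rightarrow> (nat \<times> nat) set" where
  "pairs k = {(i, l). i \<le> l \<and> l < k}"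

lemma finite_pairs: "finite (pairs k)"
  by (rule finite_subset[of _ "{..<k} \<times> {..<k}"]) (auto simp: pairs_def)

lemma card_pairs: "card (pairs k) = (k + 1) choose 2"
proof (induction k)
  case (Suc k)
  have "pairs (Suc k) = pairs k \<union> (\<lambda>i. (i, k)) ` {..k}"
    by (auto simp: pairs_def)
  moreover have "pairs k \<inter> (\<lambda>i. (i, k)) ` {..k} = {}"
    by (auto simp: pairs_def)
  ultimately have "card (pairs (Suc k)) = card (pairs k) + Suc k"
    using finite_pairs by (simp add: card_Un_disjoint card_image inj_on_def)
  with Suc.IH show ?case
    by (simp add: numeral_2_eq_2)
qed (simp add: pairs_def)

lemma rowspace_eq_sums_of_rows:
  "rowspace k n G = range (\<lambda>a. \<Sum>i<k. scal (a i) (row n G i))"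
proof -
  have "(\<lambda>j. if j < n then \<Sum>i<k. a i * G i j else 0) = (\<Sum>i<k. scal (a i) (row n G i))" for a
    by (simp add: fun_eq_iff sum_fun_apply row_def)
  then show ?thesis
    by (auto simp: rowspace_def)
qed

lemma row_in_rowspace: "i < k \<Longrightarrow> row n G i \<in> rowspace k n G"
  unfolding rowspace_eq_sums_of_rows
  by (rule range_eqI[of _ _ "\<lambda>i'. if i' = i then 1 else 0"])
    (simp add: if_distrib[of "\<lambda>c. scal c _"] cong: if_cong)

lemma product_of_rows_in_row_products:
  assumes "i < k" "l < k"
  shows "row n G i * row n G l \<in> row_product n G ` pairs k"
proof (cases "i \<le> l")
  case True
  with assms show ?thesis
    by (force simp: row_product_def pairs_def)
next
  case False
  with assms have "(l, i) \<in> pairs k"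
    by (simp add: pairs_def)
  then show ?thesis
    by (force simp: row_product_def mult.commute)
qed

lemma schur_square_rowspace:
  "schur_square (rowspace k n G) = V.span (row_product n G ` pairs k)"
  unfolding schur_square_eq_span_products V.span_eq
proof (intro conjI)
  show "{u * v | u v. u \<in> rowspace k n G \<and> v \<in> rowspace k n G} \<subseteq> V.span (row_product n G ` pairs k)"
  proof clarify
    fix u v assume "u \<in> rowspace k n G" "v \<in> rowspace k n G"
    then obtain a b where "u = (\<Sum>i<k. scal (a i) (row n G i))" "v = (\<Sum>l<k. scal (b l) (row n G l))"
      unfolding rowspace_eq_sums_of_rows by blast
    then have "u * v = (\<Sum>i<k. \<Sum>l<k. scal (a i * b l) (row n G i * row n G l))"
      by (simp add: sum_product fun_eq_iff sum_fun_apply mult_ac)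
    also have "\<dots> \<in> V.span (row_product n G ` pairs k)"
      by (intro V.span_sum V.span_scale V.span_base product_of_rows_in_row_products) auto
    finally show "u * v \<in> V.span (row_product n G ` pairs k)" .
  qed
  have "row_product n G p \<in> {u * v | u v. u \<in> rowspace k n G \<and> v \<in> rowspace k n G}"
    if "p \<in> pairs k" for p
  proof -
    from that have "fst p < k" "snd p < k"
      by (auto simp: pairs_def)
    then show ?thesis
      unfolding row_product_def by (blast intro: row_in_rowspace)
  qed
  then show "row_product n G ` pairs k \<subseteq> V.span {u * v | u v. u \<in> rowspace k n G \<and> v \<in> rowspace k n G}"
    using V.span_superset by blast
qed

lemma qeval_eq_sum_pairs:
  assumes "Q \<in> quad_forms k" "j < n"
  shows "qeval k Q (\<lambda>i. to_ac (G i j)) =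
    (\<Sum>p\<in>pairs k. Q (fst p) (snd p) * to_ac (row_product n G p j))"
proof -
  have "qeval k Q (\<lambda>i. to_ac (G i j)) =
      (\<Sum>p\<in>{..<k} \<times> {..<k}. Q (fst p) (snd p) * to_ac (G (fst p) j) * to_ac (G (snd p) j))"
    by (simp add: qeval_def sum.cartesian_product case_prod_beta)
  also have "\<dots> = (\<Sum>p\<in>pairs k. Q (fst p) (snd p) * to_ac (G (fst p) j) * to_ac (G (snd p) j))"
  proof (rule sum.mono_neutral_right)
    show "\<forall>p\<in>{..<k} \<times> {..<k} - pairs k. Q (fst p) (snd p) * to_ac (G (fst p) j) * to_ac (G (snd p) j) = 0"
    proof
      fix p assume "p \<in> {..<k} \<times> {..<k} - pairs k"
      then have "snd p < fst p"
        by (auto simp: pairs_def)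
      with assms(1) have "Q (fst p) (snd p) = 0"
        unfolding quad_forms_def by blast
      then show "Q (fst p) (snd p) * to_ac (G (fst p) j) * to_ac (G (snd p) j) = 0"
        by simp
    qed
  qed (auto simp: pairs_def)
  also have "\<dots> = (\<Sum>p\<in>pairs k. Q (fst p) (snd p) * to_ac (row_product n G p j))"
    using assms(2) by (simp add: row_product_def row_def mult.assoc)
  finally show ?thesis .
qed

lemma vanishing_quadrics_eq_linear_relations:
  "vanishing_quadrics k n G = linear_relations (pairs k) (row_product n G) n"
proof -
  have quad_forms: "Q \<in> quad_forms k \<longleftrightarrow> (\<forall>i l. (i, l) \<notin> pairs k \<longrightarrow> Q i l = 0)"
    for Q :: "nat \<Rightarrow> nat \<Rightarrow> 'a alg_closure"
    by (auto simp: quad_forms_def pairs_def not_le)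
  show ?thesis
    unfolding vanishing_quadrics_def linear_relations_def
  proof (rule Collect_cong)
    fix Q :: "nat \<Rightarrow> nat \<Rightarrow> 'a alg_closure"
    show "(Q \<in> quad_forms k \<and> (\<forall>j<n. qeval k Q (\<lambda>i. to_ac (G i j)) = 0)) \<longleftrightarrow>
        (\<forall>i l. (i, l) \<notin> pairs k \<longrightarrow> Q i l = 0) \<and>
        (\<forall>j<n. (\<Sum>p\<in>pairs k. Q (fst p) (snd p) * to_ac (row_product n G p j)) = 0)"
      using qeval_eq_sum_pairs[of Q k _ n G] quad_forms[of Q] by auto
  qed
qed

lemma qdim_vanishing_quadrics:
  "qdim (vanishing_quadrics k n G) + vdim (schur_square (rowspace k n G)) = (k + 1) choose 2"
proof -
  have "\<forall>p\<in>pairs k. supported_on {..<n} (row_product n G p)"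
    by (simp add: supported_on_def row_product_def row_def)
  with finite_pairs have "qdim (linear_relations (pairs k) (row_product n G) n) +
      vdim (row_product n G ` pairs k) = card (pairs k)"
    by (rule dim_linear_relations)
  then show ?thesis
    by (simp add: vanishing_quadrics_eq_linear_relations schur_square_rowspace vdim_def card_pairs)
qed

lemma gd_eq_if_fails_by:
  assumes "fails_by k n G m"
  shows "gd k n G = int m - 1"
  unfolding gd_def
proof (rule the_equality)
  show "\<exists>m'. fails_by k n G m' \<and> int m - 1 = int m' - 1"
    using assms by blast
next
  fix g assume "\<exists>m'. fails_by k n G m' \<and> g = int m' - 1"
  with assms show "g = int m - 1"
    by (auto simp: fails_by_def)
qed

theorem mainTheorem3:
  fixes G :: "nat \<Rightarrow> nat \<Rightarrow> 'a::field"
    and C :: "(nat \<Rightarrow> 'a) set"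
    and k :: nat
  assumes "k \<ge> 1"
    and "self_dual (2 * k) C"
    and "generator_matrix k (2 * k) G C"
    and "no_two_proportional_columns k (2 * k) G"
  shows "fails_by k (2 * k) G (nb {..<2 * k} C)
       \<and> gd k (2 * k) G = int (2 * k) - int (vdim (schur_square C)) - 1
       \<and> int (2 * k) - int (vdim (schur_square C)) - 1 = int (nb {..<2 * k} C) - 1"
proof -
  \<comment> \<open>The last hypothesis only makes the columns distinct points; the count does not use it.\<close>
  have schur: "vdim (schur_square C) + nb {..<2 * k} C = 2 * k"
    using assms(1,2) by (intro dim_schur_square_add_nb) auto
  have "C = rowspace k (2 * k) G"
    using assms(3) by (simp add: generator_matrix_def)
  then have "qdim (vanishing_quadrics k (2 * k) G) + vdim (schur_square C) = (k + 1) choose 2"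
    by (simp add: qdim_vanishing_quadrics)
  with schur have fails: "fails_by k (2 * k) G (nb {..<2 * k} C)"
    unfolding fails_by_def by linarith
  with schur show ?thesis
    using gd_eq_if_fails_by[OF fails] by linarith
qed

end
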